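(* Let $g$ be any change of section. Then: (1) for all $\theta\in\mathbb{R}^d$, the matrices $\widehat\mu(\theta)$ and ${}^g\widehat\mu(\theta)$ have the same eigenvalues; in particular ${}^gk(\theta)=k(\theta)$ wherever $k$ is defined; (2) ${}^g\widehat\mu(0)=\widehat\mu(0)$, i.e. the Markovian part of the $g$-changed process has the same transition matrix as the original one; in particular ${}^g\pi=\pi$; (3) ${}^gm=m$; (4) there is no affine hyperplane $H$ of $\mathbb{R}^d$ such that $\operatorname{supp}({}^g\mu)\subset H$, where $\operatorname{supp}({}^g\mu)=\bigcup_{i,j}\operatorname{supp}({}^g\mu_{i,j})$.
   Context: Fix integers $d,p\ge 1$. Let $(Z_n)=(A_n,M_n)$ be a Markov-additive process on $\mathbb{Z}^d\times\{1,\dots,p\}$ (a Markov chain with $\mathbb{P}_{(x,i)}((A_1,M_1)=(x',i'))=\mathbb{P}_{(0,i)}((A_1,M_1)=(x'-x,i'))$), with jump matrix of sub-probability measures $\mu_{i,j}(x)=\mathbb{P}_{(0,i)}((A_1,M_1)=(x,j))$, assumed irreducible, aperiodic (for every state $(x,i)$, $\gcd\{n\ge1:\mathbb{P}_{(x,i)}(Z_n=(x,i))>0\}=1$), and with finite exponential moments ($\sum_x e^{\alpha\|x\|}\mu_{i,j}(x)<\infty$ for all $\alpha>0$). Fourier transform: $\widehat\mu(\theta)_{i,j}=\sum_x e^{\mathbf{i}x\cdot\theta}\mu_{i,j}(x)$; $\widehat\mu(0)$ is the transition matrix of $(M_n)$, with unique stationary distribution $\pi$. Local drifts $m_{i,j}=\sum_x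 x\mu_{i,j}(x)$, global drift $m=\sum_{i,j}\pi_im_{i,j}$. Near $\theta=0$, $k(\theta)$ denotes the unique eigenvalue of maximal modulus of $\widehat\mu(\theta)$ (it is simple). A change of section is a real $p\times d$ matrix $g$ with rows $g_1,\dots,g_p$; the $g$-changed process is the Markov-additive process (with additive part in a countable subset of $\mathbb{R}^d$) with jump measures ${}^g\mu_{i,j}(x)=\mu_{i,j}(x+g_j-g_i)$, $x\in\mathbb{R}^d$. All quantities of the $g$-changed process are defined in the same way and denoted with a left superscript $g$: ${}^g\widehat\mu(\theta)_{i,j}=\sum_{x\in\mathbb{R}^d}e^{\mathbf{i}x\cdot\theta}\,{}^g\mu_{i,j}(x)$, ${}^g\pi$ the stationary distribution of the matrix ${}^g\widehat\mu(0)$, ${}^gm_{i,j}=\sum_x x\,{}^g\mu_{i,j}(x)$, ${}^gm=\sum_{i,j}{}^g\pi_i\,{}^gm_{i,j}$, ${}^gk$ the leading eigenvalue of ${}^g\widehat\mu$. *)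

theory Defs
  imports "HOL-Analysis.Analysis"
begin

text \<open>Markov-additive process on Z^d x P, where the dimension d is the type 'd and
the finite set of modes {1..p} is the finite type 'p.  The jump measures are
mu i j x = P_(0,i)((A_1,M_1) = (x,j)), x :: int^'d.\<close>

definition embed :: "int ^ 'd \<Rightarrow> real ^ 'd" where
  "embed x = (\<chi> k. real_of_int (x $ k))"

definition mak_kernel :: "('p \<Rightarrow> 'p \<Rightarrow> int ^ 'd \<Rightarrow> real) \<Rightarrow> ((int ^ 'd) \<times> 'p) \<Rightarrow> ((int ^ 'd) \<times> 'p) \<Rightarrow> real" where
  "mak_kernel \<mu> s t = \<mu> (snd s) (snd t) (fst t - fst s)"

primrec mak_nstep :: "('p \<Rightarrow> 'p \<Rightarrow> int ^ 'd \<Rightarrow> real) \<Rightarrow> nat \<Rightarrow> ((int ^ 'd) \<times> 'p) \<Rightarrow> ((int ^ 'd) \<times> 'p) \<Rightarrow> real" where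
  "mak_nstep \<mu> 0 s t = (if s = t then 1 else 0)"
| "mak_nstep \<mu> (Suc n) s t = (\<Sum>\<^sub>\<infinity>u. mak_nstep \<mu> n s u * mak_kernel \<mu> u t)"

definition MAP_assms :: "('p::finite \<Rightarrow> 'p \<Rightarrow> int ^ 'd \<Rightarrow> real) \<Rightarrow> bool" where
  "MAP_assms \<mu> \<longleftrightarrow>
     (\<forall>i j x. \<mu> i j x \<ge> 0) \<and>
     (\<forall>i j. \<mu> i j summable_on UNIV) \<and>
     (\<forall>i. (\<Sum>j\<in>UNIV. \<Sum>\<^sub>\<infinity>x. \<mu> i j x) = 1) \<and>
     (\<forall>s t. \<exists>n. mak_nstep \<mu> n s t > 0) \<and>
     (\<forall>s. Gcd {n. n \<ge> 1 \<and> mak_nstep \<mu> n s s > 0} = 1) \<and>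
     (\<forall>\<alpha>>0. \<forall>i j. (\<lambda>x. exp (\<alpha> * norm (embed x)) * \<mu> i j x) summable_on UNIV)"

definition muR :: "('p \<Rightarrow> 'p \<Rightarrow> int ^ 'd \<Rightarrow> real) \<Rightarrow> 'p \<Rightarrow> 'p \<Rightarrow> real ^ 'd \<Rightarrow> real" where
  "muR \<mu> i j y = (if y \<in> range embed then \<mu> i j (inv embed y) else 0)"

definition gmu :: "('p \<Rightarrow> real ^ 'd) \<Rightarrow> ('p \<Rightarrow> 'p \<Rightarrow> int ^ 'd \<Rightarrow> real) \<Rightarrow> 'p \<Rightarrow> 'p \<Rightarrow> real ^ 'd \<Rightarrow> real" where
  "gmu g \<mu> i j y = muR \<mu> i j (y + g j - g i)"

definition fourier :: "('p::finite \<Rightarrow> 'p \<Rightarrow> real ^ 'd \<Rightarrow> real) \<Rightarrow> real ^ 'd \<Rightarrow> complex ^ 'p ^ 'p" where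
  "fourier \<nu> \<theta> = (\<chi> i j. \<Sum>\<^sub>\<infinity>y. exp (\<i> * complex_of_real (y \<bullet> \<theta>)) * complex_of_real (\<nu> i j y))"

definition eigvals :: "complex ^ 'p ^ 'p \<Rightarrow> complex set" where
  "eigvals A = {c. \<exists>v. v \<noteq> 0 \<and> A *v v = c *s v}"

definition leading_eig :: "complex ^ 'p ^ 'p \<Rightarrow> complex" where
  "leading_eig A = (THE c. c \<in> eigvals A \<and> (\<forall>e\<in>eigvals A. e \<noteq> c \<longrightarrow> cmod e < cmod c))"

definition is_stationary :: "complex ^ 'p ^ 'p \<Rightarrow> real ^ 'p \<Rightarrow> bool" where
  "is_stationary A \<pi> \<longleftrightarrow> (\<forall>i. \<pi> $ i \<ge> 0) \<and> (\<Sum>i\<in>UNIV. \<pi> $ i) = 1 \<and>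
     (\<forall>j. (\<Sum>i\<in>UNIV. complex_of_real (\<pi> $ i) * A $ i $ j) = complex_of_real (\<pi> $ j))"

definition stat_dist :: "complex ^ 'p ^ 'p \<Rightarrow> real ^ 'p" where
  "stat_dist A = (THE \<pi>. is_stationary A \<pi>)"

definition local_drift :: "('p \<Rightarrow> 'p \<Rightarrow> real ^ 'd \<Rightarrow> real) \<Rightarrow> 'p \<Rightarrow> 'p \<Rightarrow> real ^ 'd" where
  "local_drift \<nu> i j = (\<Sum>\<^sub>\<infinity>y. \<nu> i j y *\<^sub>R y)"

definition global_drift :: "('p::finite \<Rightarrow> 'p \<Rightarrow> real ^ 'd \<Rightarrow> real) \<Rightarrow> real ^ 'd" where
  "global_drift \<nu> = (let \<pi> = stat_dist (fourier \<nu> 0) in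
     (\<Sum>i\<in>UNIV. \<Sum>j\<in>UNIV. (\<pi> $ i) *\<^sub>R local_drift \<nu> i j))"

definition supp_all :: "('p \<Rightarrow> 'p \<Rightarrow> real ^ 'd \<Rightarrow> real) \<Rightarrow> (real ^ 'd) set" where
  "supp_all \<nu> = {y. \<exists>i j. \<nu> i j y \<noteq> 0}"

end

theory Submission
  imports Defs
begin

text \<open>
A change of section conjugates each Fourier matrix by the diagonal unitary matrix with entries
exp (i g_i . theta); hence it preserves the spectrum and is invisible at theta = 0.  The local drift
m_ij moves by P_ij (g_j - g_i), where P is the transition matrix of the modes, and these corrections
cancel once they are averaged against the stationary distribution of P.  Finally, if the changed
jumps were supported in a hyperplane a . y = b, then a . (x - g_i) would increase by exactly b at
every step of the chain; irreducibility gives paths from (0, i) to (e_k, i) and back, which forces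
b = 0 and a_k = 0 for all k.
\<close>

lemma inj_embed: "inj embed"
  by (auto simp: inj_def embed_def vec_eq_iff)

lemma embed_diff: "embed (x - y) = embed x - embed y"
  by (simp add: embed_def vec_eq_iff)

lemma embed_zero [simp]: "embed 0 = 0"
  by (simp add: embed_def vec_eq_iff)

lemma embed_axis [simp]: "embed (axis k 1) = axis k 1"
  by (simp add: embed_def vec_eq_iff axis_def)

lemma muR_embed [simp]: "muR \<mu> i j (embed x) = \<mu> i j x"
  by (simp add: muR_def inv_f_f[OF inj_embed])

lemma muR_outside_lattice: "y \<notin> range embed \<Longrightarrow> muR \<mu> i j y = 0"
  by (simp add: muR_def)

lemma summable_on_lattice_iff:
  fixes F :: "real ^ 'd \<Rightarrow> 'b::{comm_monoid_add, topological_space}"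
  assumes "\<And>y. y \<notin> range embed \<Longrightarrow> F y = 0"
  shows "F summable_on UNIV \<longleftrightarrow> (\<lambda>x. F (embed x)) summable_on UNIV"
proof -
  have "F summable_on UNIV \<longleftrightarrow> F summable_on range embed"
    by (rule summable_on_cong_neutral) (use assms in auto)
  also have "\<dots> \<longleftrightarrow> (\<lambda>x. F (embed x)) summable_on UNIV"
    using summable_on_reindex[OF inj_embed] by (simp add: comp_def)
  finally show ?thesis .
qed

lemma infsum_lattice:
  fixes F :: "real ^ 'd \<Rightarrow> 'b::{comm_monoid_add, t2_space}"
  assumes "\<And>y. y \<notin> range embed \<Longrightarrow> F y = 0"
  shows "(\<Sum>\<^sub>\<infinity>y. F y) = (\<Sum>\<^sub>\<infinity>x. F (embed x))"
proof -
  have "(\<Sum>\<^sub>\<infinity>y. F y) = infsum F (range embed)"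
    by (rule infsum_cong_neutral) (use assms in auto)
  also have "\<dots> = (\<Sum>\<^sub>\<infinity>x. F (embed x))"
    using infsum_reindex[OF inj_embed] by (simp add: comp_def)
  finally show ?thesis .
qed

lemma infsum_translate:
  fixes f :: "'a::ab_group_add \<Rightarrow> 'b::{comm_monoid_add, t2_space}"
  shows "(\<Sum>\<^sub>\<infinity>y. f (y + c)) = (\<Sum>\<^sub>\<infinity>y. f y)"
  by (rule infsum_reindex_bij_witness[where i = "\<lambda>y. y - c" and j = "\<lambda>y. y + c"]) auto

lemma eigvals_diag_conj_subset:
  fixes A :: "complex ^ 'p ^ 'p"
  assumes "\<And>i. d i \<noteq> 0"
  shows "eigvals A \<subseteq> eigvals (\<chi> i j. d i * A $ i $ j / d j)"
proof
  fix c assume "c \<in> eigvals A"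
  then obtain v where "v \<noteq> 0" and v: "A *v v = c *s v"
    by (auto simp: eigvals_def)
  define w where "w = (\<chi> j. d j * v $ j)"
  have "w \<noteq> 0"
    using \<open>v \<noteq> 0\<close> assms by (auto simp: w_def vec_eq_iff)
  moreover have "(\<chi> i j. d i * A $ i $ j / d j) *v w = c *s w"
  proof -
    have "(\<Sum>j\<in>UNIV. d i * A $ i $ j / d j * (d j * v $ j)) = d i * (\<Sum>j\<in>UNIV. A $ i $ j * v $ j)" for i
      using assms by (simp add: sum_distrib_left field_simps)
    with v show ?thesis
      by (simp add: vec_eq_iff matrix_vector_mult_def w_def)
  qed
  ultimately show "c \<in> eigvals (\<chi> i j. d i * A $ i $ j / d j)"
    by (auto simp: eigvals_def)
qed

lemma eigvals_diag_conj:
  fixes A :: "complex ^ 'p ^ 'p"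
  assumes "\<And>i. d i \<noteq> 0"
  shows "eigvals (\<chi> i j. d i * A $ i $ j / d j) = eigvals A"
proof
  let ?B = "\<chi> i j. d i * A $ i $ j / d j"
  have "eigvals ?B \<subseteq> eigvals (\<chi> i j. inverse (d i) * ?B $ i $ j / inverse (d j))"
    by (rule eigvals_diag_conj_subset) (use assms in auto)
  also have "(\<chi> i j. inverse (d i) * ?B $ i $ j / inverse (d j)) = A"
    using assms by (simp add: vec_eq_iff field_simps)
  finally show "eigvals ?B \<subseteq> eigvals A" .
qed (rule eigvals_diag_conj_subset[OF assms])

lemma fourier_gmu:
  "fourier (gmu g \<mu>) \<theta> =
     (\<chi> i j. exp (\<i> * of_real (g i \<bullet> \<theta>)) * fourier (muR \<mu>) \<theta> $ i $ j / exp (\<i> * of_real (g j \<bullet> \<theta>)))"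
proof -
  let ?e = "\<lambda>t::real. exp (\<i> * complex_of_real t)"
  have "fourier (gmu g \<mu>) \<theta> $ i $ j = ?e (g i \<bullet> \<theta>) * fourier (muR \<mu>) \<theta> $ i $ j / ?e (g j \<bullet> \<theta>)" for i j
  proof -
    let ?c = "g j - g i"
    have phase: "?e ((z - ?c) \<bullet> \<theta>) = ?e (g i \<bullet> \<theta>) / ?e (g j \<bullet> \<theta>) * ?e (z \<bullet> \<theta>)" for z
      by (simp add: inner_diff_left algebra_simps flip: exp_add exp_diff)
    have "fourier (gmu g \<mu>) \<theta> $ i $ j = (\<Sum>\<^sub>\<infinity>y. ?e (((y + ?c) - ?c) \<bullet> \<theta>) * muR \<mu> i j (y + ?c))"
      by (simp add: fourier_def gmu_def add_diff_eq)
    also have "\<dots> = (\<Sum>\<^sub>\<infinity>z. ?e ((z - ?c) \<bullet> \<theta>) * muR \<mu> i j z)"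
      by (rule infsum_translate)
    also have "\<dots> = ?e (g i \<bullet> \<theta>) / ?e (g j \<bullet> \<theta>) * fourier (muR \<mu>) \<theta> $ i $ j"
      unfolding phase fourier_def vec_lambda_beta mult.assoc by (rule infsum_cmult_right')
    finally show ?thesis
      by simp
  qed
  then show ?thesis
    by (simp add: vec_eq_iff)
qed

lemma eigvals_fourier_gmu: "eigvals (fourier (gmu g \<mu>) \<theta>) = eigvals (fourier (muR \<mu>) \<theta>)"
  unfolding fourier_gmu by (rule eigvals_diag_conj) simp

lemma fourier_gmu_zero: "fourier (gmu g \<mu>) 0 = fourier (muR \<mu>) 0"
  by (simp add: fourier_gmu vec_eq_iff)

definition stationary_distr :: "('p::finite \<Rightarrow> 'p \<Rightarrow> real) \<Rightarrow> real ^ 'p \<Rightarrow> bool" where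
  "stationary_distr P \<pi> \<longleftrightarrow> (\<forall>i. 0 \<le> \<pi> $ i) \<and> (\<Sum>i\<in>UNIV. \<pi> $ i) = 1 \<and>
     (\<forall>j. (\<Sum>i\<in>UNIV. \<pi> $ i * P i j) = \<pi> $ j)"

lemma is_stationary_of_real_iff:
  "is_stationary (\<chi> i j. complex_of_real (P i j)) \<pi> \<longleftrightarrow> stationary_distr P \<pi>"
proof -
  have "(\<Sum>i\<in>UNIV. complex_of_real (\<pi> $ i) * (\<chi> i j. complex_of_real (P i j)) $ i $ j)
        = complex_of_real (\<Sum>i\<in>UNIV. \<pi> $ i * P i j)" for j
    by simp
  then show ?thesis
    unfolding is_stationary_def stationary_distr_def by (simp only: of_real_eq_iff)
qed

lemma stationary_distr_exists:
  fixes P :: "'p::finite \<Rightarrow> 'p \<Rightarrow> real"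
  assumes nonneg: "\<And>i j. 0 \<le> P i j" and rows: "\<And>i. (\<Sum>j\<in>UNIV. P i j) = 1"
  shows "\<exists>\<pi>. stationary_distr P \<pi>"
proof -
  define S :: "(real ^ 'p) set" where "S = {\<pi>. (\<forall>i. 0 \<le> \<pi> $ i) \<and> (\<Sum>i\<in>UNIV. \<pi> $ i) = 1}"
  define f :: "real ^ 'p \<Rightarrow> real ^ 'p" where "f \<pi> = (\<chi> j. \<Sum>i\<in>UNIV. \<pi> $ i * P i j)" for \<pi>
  have "closed S"
    unfolding S_def
    by (intro closed_Collect_conj closed_Collect_all closed_Collect_le closed_Collect_eq)
       (auto intro!: continuous_intros continuous_on_component)
  moreover have "bounded S"
  proof (rule boundedI)
    fix \<pi> assume "\<pi> \<in> S"
    then have "(\<Sum>i\<in>UNIV. \<bar>\<pi> $ i\<bar>) = 1"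
      by (simp add: S_def)
    then show "norm \<pi> \<le> 1"
      using norm_le_l1_cart[of \<pi>] by simp
  qed
  ultimately have "compact S"
    by (simp add: compact_eq_bounded_closed)
  moreover have "convex S"
    by (auto simp: convex_def S_def sum.distrib simp flip: sum_distrib_left)
  moreover have "(\<chi> i. 1 / real CARD('p)) \<in> S"
    by (simp add: S_def)
  then have "S \<noteq> {}"
    by blast
  moreover have "continuous_on S f"
    unfolding f_def by (intro continuous_intros continuous_on_component)
  moreover have "f \<pi> \<in> S" if "\<pi> \<in> S" for \<pi>
  proof -
    have "(\<Sum>j\<in>UNIV. \<Sum>i\<in>UNIV. \<pi> $ i * P i j) = (\<Sum>i\<in>UNIV. \<pi> $ i * (\<Sum>j\<in>UNIV. P i j))"
      by (subst sum.swap) (simp add: sum_distrib_left)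
    with that show ?thesis
      using nonneg by (auto simp: S_def f_def rows intro!: sum_nonneg)
  qed
  ultimately obtain \<pi> where "\<pi> \<in> S" "f \<pi> = \<pi>"
    using brouwer[of S f] by blast
  then have "stationary_distr P \<pi>"
    by (auto simp: stationary_distr_def S_def f_def vec_eq_iff)
  then show ?thesis ..
qed

lemma invariant_measure_pos:
  fixes P :: "'p::finite \<Rightarrow> 'p \<Rightarrow> real"
  assumes nonneg: "\<And>i j. 0 \<le> P i j"
    and irreducible: "\<And>i j. (i, j) \<in> {(i, j). 0 < P i j}\<^sup>*"
    and \<nu>_nonneg: "\<And>i. 0 \<le> \<nu> $ i" and invariant: "\<And>j. (\<Sum>i\<in>UNIV. \<nu> $ i * P i j) = \<nu> $ j"
    and "0 < \<nu> $ a"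
  shows "0 < \<nu> $ b"
  using irreducible[of a b]
proof (induction rule: rtrancl_induct)
  case base
  show ?case by fact
next
  case (step y z)
  have "\<nu> $ y * P y z \<le> (\<Sum>i\<in>UNIV. \<nu> $ i * P i z)"
    by (rule member_le_sum) (auto intro!: mult_nonneg_nonneg \<nu>_nonneg nonneg)
  moreover have "0 < \<nu> $ y * P y z"
    using step by simp
  ultimately show ?case
    using invariant[of z] by simp
qed

text \<open>Uniqueness: subtract from \<pi> the largest multiple c \<rho> that stays nonnegative; the difference
is invariant and vanishes somewhere, hence everywhere.\<close>

lemma stationary_distr_unique:
  fixes P :: "'p::finite \<Rightarrow> 'p \<Rightarrow> real"
  assumes nonneg: "\<And>i j. 0 \<le> P i j"
    and irreducible: "\<And>i j. (i, j) \<in> {(i, j). 0 < P i j}\<^sup>*"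
    and \<pi>: "stationary_distr P \<pi>" and \<rho>: "stationary_distr P \<rho>"
  shows "\<pi> = \<rho>"
proof -
  have \<rho>_nonneg: "0 \<le> \<rho> $ i" and \<rho>_inv: "(\<Sum>i\<in>UNIV. \<rho> $ i * P i j) = \<rho> $ j" for i j
    using \<rho> by (auto simp: stationary_distr_def)
  have "\<exists>a. \<rho> $ a \<noteq> 0"
  proof (rule ccontr)
    assume "\<not> ?thesis"
    then have "(\<Sum>i\<in>UNIV. \<rho> $ i) = 0"
      by simp
    with \<rho> show False
      by (simp add: stationary_distr_def)
  qed
  then obtain a where "0 < \<rho> $ a"
    using \<rho>_nonneg by (metis less_eq_real_def)
  then have \<rho>_pos: "0 < \<rho> $ i" for i
    by (rule invariant_measure_pos[OF nonneg irreducible \<rho>_nonneg \<rho>_inv])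
  define c where "c = Min (range (\<lambda>i. \<pi> $ i / \<rho> $ i))"
  have "c \<in> range (\<lambda>i. \<pi> $ i / \<rho> $ i)"
    unfolding c_def by (rule Min_in) auto
  then obtain i0 where i0: "c = \<pi> $ i0 / \<rho> $ i0"
    by blast
  define \<nu> where "\<nu> = \<pi> - c *\<^sub>R \<rho>"
  have \<nu>_nonneg: "0 \<le> \<nu> $ i" for i
  proof -
    have "c \<le> \<pi> $ i / \<rho> $ i"
      by (simp add: c_def)
    then show ?thesis
      using \<rho>_pos[of i] by (simp add: \<nu>_def pos_le_divide_eq)
  qed
  have \<nu>_inv: "(\<Sum>i\<in>UNIV. \<nu> $ i * P i j) = \<nu> $ j" for j
  proof -
    have "(\<Sum>i\<in>UNIV. \<nu> $ i * P i j) = (\<Sum>i\<in>UNIV. \<pi> $ i * P i j) - c * (\<Sum>i\<in>UNIV. \<rho> $ i * P i j)"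
      by (simp add: \<nu>_def algebra_simps sum_subtractf sum_distrib_left)
    then show ?thesis
      using \<pi> \<rho>_inv[of j] by (simp add: stationary_distr_def \<nu>_def)
  qed
  have "\<nu> $ i = 0" for i
  proof (rule ccontr)
    assume "\<nu> $ i \<noteq> 0"
    with \<nu>_nonneg[of i] have "0 < \<nu> $ i"
      by simp
    then have "0 < \<nu> $ i0"
      by (rule invariant_measure_pos[OF nonneg irreducible \<nu>_nonneg \<nu>_inv])
    then show False
      using \<rho>_pos[of i0] by (simp add: \<nu>_def i0)
  qed
  then have "\<pi> = c *\<^sub>R \<rho>"
    by (simp add: \<nu>_def vec_eq_iff)
  moreover from this have "c = 1"
    using \<pi> \<rho> by (simp add: stationary_distr_def flip: sum_distrib_left)
  ultimately show ?thesis
    by simp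
qed

lemma stationary_increments_sum_zero:
  fixes h :: "'p::finite \<Rightarrow> 'v::real_vector"
  assumes \<pi>: "stationary_distr P \<pi>" and rows: "\<And>i. (\<Sum>j\<in>UNIV. P i j) = 1"
  shows "(\<Sum>i\<in>UNIV. \<Sum>j\<in>UNIV. (\<pi> $ i * P i j) *\<^sub>R (h j - h i)) = 0"
proof -
  have "(\<Sum>i\<in>UNIV. \<Sum>j\<in>UNIV. (\<pi> $ i * P i j) *\<^sub>R h j) = (\<Sum>j\<in>UNIV. \<pi> $ j *\<^sub>R h j)"
    using \<pi> by (subst sum.swap) (simp add: stationary_distr_def flip: scaleR_sum_left)
  moreover have "(\<Sum>i\<in>UNIV. \<Sum>j\<in>UNIV. (\<pi> $ i * P i j) *\<^sub>R h i) = (\<Sum>i\<in>UNIV. \<pi> $ i *\<^sub>R h i)"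
    by (simp add: rows flip: scaleR_sum_left sum_distrib_left)
  ultimately show ?thesis
    by (simp add: scaleR_diff_right sum_subtractf)
qed

lemma mak_nstep_nonzero_relpow:
  "mak_nstep \<mu> n s t \<noteq> 0 \<Longrightarrow> (s, t) \<in> {(u, v). mak_kernel \<mu> u v \<noteq> 0} ^^ n"
proof (induction n arbitrary: t)
  case 0
  then show ?case
    by (simp split: if_splits)
next
  case (Suc n)
  then obtain u where "mak_nstep \<mu> n s u \<noteq> 0" "mak_kernel \<mu> u t \<noteq> 0"
    using infsum_0[of UNIV "\<lambda>u. mak_nstep \<mu> n s u * mak_kernel \<mu> u t"] by auto
  with Suc.IH show ?case
    by (intro relpow_Suc_I[of _ u]) auto
qed

definition mode_matrix :: "('p \<Rightarrow> 'p \<Rightarrow> int ^ 'd \<Rightarrow> real) \<Rightarrow> 'p \<Rightarrow> 'p \<Rightarrow> real" where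
  "mode_matrix \<mu> i j = (\<Sum>\<^sub>\<infinity>x. \<mu> i j x)"

lemma mode_matrix_nonneg: "MAP_assms \<mu> \<Longrightarrow> 0 \<le> mode_matrix \<mu> i j"
  unfolding mode_matrix_def by (rule infsum_nonneg) (simp add: MAP_assms_def)

lemma mode_matrix_row_sum: "MAP_assms \<mu> \<Longrightarrow> (\<Sum>j\<in>UNIV. mode_matrix \<mu> i j) = 1"
  by (simp add: mode_matrix_def MAP_assms_def)

lemma mode_matrix_pos_if_kernel_nonzero:
  assumes "MAP_assms \<mu>" and "mak_kernel \<mu> u v \<noteq> 0"
  shows "0 < mode_matrix \<mu> (snd u) (snd v)"
proof -
  let ?x = "fst v - fst u"
  have "\<mu> (snd u) (snd v) ?x = (\<Sum>\<^sub>\<infinity>x\<in>{?x}. \<mu> (snd u) (snd v) x)"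
    by simp
  also have "\<dots> \<le> mode_matrix \<mu> (snd u) (snd v)"
    unfolding mode_matrix_def by (rule infsum_mono2) (use assms(1) in \<open>auto simp: MAP_assms_def\<close>)
  moreover have "0 < \<mu> (snd u) (snd v) ?x"
    using assms by (simp add: mak_kernel_def MAP_assms_def order.not_eq_order_implies_strict)
  ultimately show ?thesis
    by linarith
qed

lemma mode_matrix_irreducible:
  assumes "MAP_assms \<mu>"
  shows "(i, j) \<in> {(i, j). 0 < mode_matrix \<mu> i j}\<^sup>*"
proof -
  obtain n where "0 < mak_nstep \<mu> n (0, i) (0, j)"
    using assms unfolding MAP_assms_def by blast
  then have "((0, i), (0, j)) \<in> {(u, v). mak_kernel \<mu> u v \<noteq> 0}\<^sup>*"
    by (intro relpow_imp_rtrancl[where n = n] mak_nstep_nonzero_relpow) simp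
  moreover have "(snd u, snd v) \<in> {(i, j). 0 < mode_matrix \<mu> i j}\<^sup>*"
    if "(u, v) \<in> {(u, v). mak_kernel \<mu> u v \<noteq> 0}\<^sup>*" for u v
    using that
  proof (induction rule: rtrancl_induct)
    case (step v w)
    then have "0 < mode_matrix \<mu> (snd v) (snd w)"
      using mode_matrix_pos_if_kernel_nonzero[OF assms] by simp
    with step.IH show ?case
      by (simp add: rtrancl_into_rtrancl)
  qed simp
  ultimately show ?thesis
    by fastforce
qed

lemma summable_muR:
  assumes "MAP_assms \<mu>"
  shows "muR \<mu> i j summable_on UNIV"
  using assms by (simp add: summable_on_lattice_iff muR_outside_lattice MAP_assms_def)

lemma infsum_muR: "(\<Sum>\<^sub>\<infinity>y. muR \<mu> i j y) = mode_matrix \<mu> i j"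
  by (simp add: infsum_lattice muR_outside_lattice mode_matrix_def)

lemma fourier_muR_zero:
  assumes "MAP_assms \<mu>"
  shows "fourier (muR \<mu>) 0 = (\<chi> i j. complex_of_real (mode_matrix \<mu> i j))"
proof -
  have "(\<Sum>\<^sub>\<infinity>y. complex_of_real (muR \<mu> i j y)) = complex_of_real (mode_matrix \<mu> i j)" for i j
    using infsumI[OF has_sum_of_real[OF has_sum_infsum[OF summable_muR[OF assms]]]]
    by (simp add: infsum_muR)
  then show ?thesis
    by (simp add: fourier_def vec_eq_iff)
qed

lemma stationary_distr_stat_dist:
  assumes "MAP_assms \<mu>"
  shows "stationary_distr (mode_matrix \<mu>) (stat_dist (fourier (muR \<mu>) 0))"
proof -
  have "\<exists>\<pi>. stationary_distr (mode_matrix \<mu>) \<pi>"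
    by (rule stationary_distr_exists) (use assms mode_matrix_nonneg mode_matrix_row_sum in auto)
  moreover have "\<pi> = \<rho>" if "stationary_distr (mode_matrix \<mu>) \<pi>" "stationary_distr (mode_matrix \<mu>) \<rho>" for \<pi> \<rho>
    by (rule stationary_distr_unique[OF _ _ that]) (use assms mode_matrix_nonneg mode_matrix_irreducible in auto)
  ultimately have "\<exists>!\<pi>. stationary_distr (mode_matrix \<mu>) \<pi>"
    by blast
  then show ?thesis
    unfolding stat_dist_def fourier_muR_zero[OF assms] is_stationary_of_real_iff by (rule theI')
qed

lemma summable_drift_muR:
  fixes \<mu> :: "'p::finite \<Rightarrow> 'p \<Rightarrow> int ^ 'd \<Rightarrow> real"
  assumes "MAP_assms \<mu>"
  shows "(\<lambda>y. muR \<mu> i j y *\<^sub>R y) summable_on UNIV"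
proof -
  have "(\<lambda>x. exp (1 * norm (embed x)) * \<mu> i j x) summable_on UNIV"
    using assms unfolding MAP_assms_def by (meson zero_less_one)
  then have "(\<lambda>x. norm (\<mu> i j x *\<^sub>R embed x)) summable_on UNIV"
  proof (rule summable_on_comparison_test)
    fix x :: "int ^ 'd"
    have "norm (embed x) \<le> exp (norm (embed x))"
      using exp_ge_add_one_self[of "norm (embed x)"] by linarith
    moreover have "0 \<le> \<mu> i j x"
      using assms by (simp add: MAP_assms_def)
    ultimately show "norm (\<mu> i j x *\<^sub>R embed x) \<le> exp (1 * norm (embed x)) * \<mu> i j x"
      by (simp add: mult_right_mono mult.commute)
  qed simp
  then have "(\<lambda>x. \<mu> i j x *\<^sub>R embed x) summable_on UNIV"
    by (rule abs_summable_summable)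
  then show ?thesis
    by (simp add: summable_on_lattice_iff muR_outside_lattice)
qed

lemma local_drift_gmu:
  assumes "MAP_assms \<mu>"
  shows "local_drift (gmu g \<mu>) i j = local_drift (muR \<mu>) i j - mode_matrix \<mu> i j *\<^sub>R (g j - g i)"
proof -
  let ?c = "g j - g i"
  let ?F = "\<lambda>z. muR \<mu> i j z *\<^sub>R z + muR \<mu> i j z *\<^sub>R (- ?c)"
  have "local_drift (gmu g \<mu>) i j = (\<Sum>\<^sub>\<infinity>y. ?F (y + ?c))"
    unfolding local_drift_def gmu_def by (rule infsum_cong) (simp add: algebra_simps)
  also have "\<dots> = (\<Sum>\<^sub>\<infinity>z. ?F z)"
    by (rule infsum_translate)
  also have "\<dots> = local_drift (muR \<mu>) i j + (\<Sum>\<^sub>\<infinity>z. muR \<mu> i j z) *\<^sub>R (- ?c)"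
    unfolding local_drift_def
    by (subst infsum_add)
       (auto intro: summable_drift_muR[OF assms] summable_muR[OF assms] summable_on_scaleR_left
             simp: infsum_scaleR_left[OF summable_muR[OF assms]])
  finally show ?thesis
    by (simp add: infsum_muR algebra_simps)
qed

lemma global_drift_gmu:
  assumes "MAP_assms \<mu>"
  shows "global_drift (gmu g \<mu>) = global_drift (muR \<mu>)"
proof -
  let ?\<pi> = "stat_dist (fourier (muR \<mu>) 0)"
  have "global_drift (gmu g \<mu>) = global_drift (muR \<mu>)
          - (\<Sum>i\<in>UNIV. \<Sum>j\<in>UNIV. (?\<pi> $ i * mode_matrix \<mu> i j) *\<^sub>R (g j - g i))"
    by (simp add: global_drift_def Let_def fourier_gmu_zero local_drift_gmu[OF assms]
                  scaleR_diff_right sum_subtractf)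
  also have "\<dots> = global_drift (muR \<mu>)"
    using stationary_increments_sum_zero[OF stationary_distr_stat_dist[OF assms]]
      mode_matrix_row_sum[OF assms] by simp
  finally show ?thesis .
qed

lemma hyperplane_level_relpow:
  assumes "supp_all (gmu g \<mu>) \<subseteq> {y. a \<bullet> y = b}"
    and "(s, t) \<in> {(u, v). mak_kernel \<mu> u v \<noteq> 0} ^^ n"
  shows "a \<bullet> (embed (fst t) - g (snd t)) = a \<bullet> (embed (fst s) - g (snd s)) + real n * b"
  using assms(2)
proof (induction n arbitrary: t)
  case 0
  then show ?case
    by simp
next
  case (Suc n)
  then obtain u where path: "(s, u) \<in> {(u, v). mak_kernel \<mu> u v \<noteq> 0} ^^ n"
    and edge: "mak_kernel \<mu> u t \<noteq> 0"
    by auto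
  define y where "y = embed (fst t) - g (snd t) - (embed (fst u) - g (snd u))"
  have "y + g (snd t) - g (snd u) = embed (fst t - fst u)"
    by (simp add: y_def embed_diff)
  then have "gmu g \<mu> (snd u) (snd t) y \<noteq> 0"
    using edge by (simp add: gmu_def mak_kernel_def)
  then have "y \<in> supp_all (gmu g \<mu>)"
    unfolding supp_all_def by blast
  with assms(1) have "a \<bullet> y = b"
    by blast
  with Suc.IH[OF path] show ?case
    by (simp add: y_def inner_diff_right algebra_simps)
qed

lemma supp_gmu_not_in_hyperplane:
  fixes \<mu> :: "'p::finite \<Rightarrow> 'p \<Rightarrow> int ^ 'd \<Rightarrow> real"
  assumes irreducible: "\<And>s t. \<exists>n. 0 < mak_nstep \<mu> n s t"
  shows "\<not> (\<exists>a b. a \<noteq> 0 \<and> supp_all (gmu g \<mu>) \<subseteq> {y. a \<bullet> y = b})"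
proof
  assume "\<exists>a b. a \<noteq> 0 \<and> supp_all (gmu g \<mu>) \<subseteq> {y. a \<bullet> y = b}"
  then obtain a b where "a \<noteq> 0" and supp: "supp_all (gmu g \<mu>) \<subseteq> {y. a \<bullet> y = b}"
    by blast
  have "a $ k = 0" for k :: 'd
  proof -
    fix i :: 'p
    let ?o = "(0 :: int ^ 'd, i)" and ?e = "(axis k 1 :: int ^ 'd, i)"
    obtain n n' where "0 < mak_nstep \<mu> n ?o ?e" "0 < mak_nstep \<mu> n' ?e ?o"
      using irreducible by blast
    then have there: "(?o, ?e) \<in> {(u, v). mak_kernel \<mu> u v \<noteq> 0} ^^ n"
      and return: "(?e, ?o) \<in> {(u, v). mak_kernel \<mu> u v \<noteq> 0} ^^ n'"
      by (simp_all add: mak_nstep_nonzero_relpow)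
    have there_level: "a $ k = real n * b" and return_level: "- a $ k = real n' * b"
      using hyperplane_level_relpow[OF supp there] hyperplane_level_relpow[OF supp return]
      by (simp_all add: inner_diff_right cart_eq_inner_axis inner_commute)
    then have "(real n + real n') * b = 0"
      unfolding distrib_right by linarith
    moreover have "n \<noteq> 0"
    proof
      assume "n = 0"
      with there have "axis k 1 $ k = (0 :: int ^ 'd) $ k"
        by simp
      then show False
        by simp
    qed
    ultimately have "b = 0"
      by simp
    with there_level show ?thesis
      by simp
  qed
  with \<open>a \<noteq> 0\<close> show False
    by (simp add: vec_eq_iff)
qed

theorem proposition2p5:
  fixes \<mu> :: "'p::finite \<Rightarrow> 'p \<Rightarrow> int ^ 'd \<Rightarrow> real"
    and g :: "'p \<Rightarrow> real ^ 'd"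
  assumes "MAP_assms \<mu>"
  shows "(\<forall>\<theta>. eigvals (fourier (gmu g \<mu>) \<theta>) = eigvals (fourier (muR \<mu>) \<theta>)
             \<and> leading_eig (fourier (gmu g \<mu>) \<theta>) = leading_eig (fourier (muR \<mu>) \<theta>))
      \<and> fourier (gmu g \<mu>) 0 = fourier (muR \<mu>) 0
      \<and> stat_dist (fourier (gmu g \<mu>) 0) = stat_dist (fourier (muR \<mu>) 0)
      \<and> global_drift (gmu g \<mu>) = global_drift (muR \<mu>)
      \<and> \<not> (\<exists>a b. a \<noteq> 0 \<and> supp_all (gmu g \<mu>) \<subseteq> {x. a \<bullet> x = b})"
proof (intro conjI allI)
  fix \<theta>
  show "eigvals (fourier (gmu g \<mu>) \<theta>) = eigvals (fourier (muR \<mu>) \<theta>)"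
    by (rule eigvals_fourier_gmu)
  then show "leading_eig (fourier (gmu g \<mu>) \<theta>) = leading_eig (fourier (muR \<mu>) \<theta>)"
    by (simp add: leading_eig_def)
next
  show "fourier (gmu g \<mu>) 0 = fourier (muR \<mu>) 0"
    by (rule fourier_gmu_zero)
  then show "stat_dist (fourier (gmu g \<mu>) 0) = stat_dist (fourier (muR \<mu>) 0)"
    by simp
next
  show "global_drift (gmu g \<mu>) = global_drift (muR \<mu>)"
    using assms by (rule global_drift_gmu)
  show "\<not> (\<exists>a b. a \<noteq> 0 \<and> supp_all (gmu g \<mu>) \<subseteq> {x. a \<bullet> x = b})"
    using assms by (intro supp_gmu_not_in_hyperplane) (auto simp: MAP_assms_def)
qed

end
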